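(* With the notation of the context, for every sufficiently small $\varepsilon>0$ the following holds. For each $i\ge0$ there exists an open $C^\infty$ curve $\gamma_i$ properly embedded in the strip $[2i,2i+1]\times\mathbb R$ such that: (1) the $y$-component of the unit tangent vector of $\gamma_i$ is nonzero at every point and bounded below by a positive constant along the whole curve; (2) $\gamma_i$ contains all the points $p^i_l=(\Delta^l(c_i)+2i,\,l)$, $l\ge0$; (3) the curvature $\kappa_i$ of $\gamma_i$ satisfies $|\kappa_i(p)|<15$ for all $p\in\gamma_i$; (4) for all $l\ge0$, $\gamma_i$ coincides near $p^i_l$ with the vertical segment $\{(\Delta^l(c_i)+2i,y):y\in(l-\varepsilon,l+\varepsilon)\}$. In particular $\gamma_i$ has infinite length.
   Context: A Turing machine with alphabet $\{0,\dots,9\}$ ($0$ blank) and states $Q=\{1,\dots,m\}$ is fixed. Tapes have finitely many nonzero symbols, written $\dots00t_{-a}\dots t_b00\dots$; $s$ is the integer with decimal digits $t_{-a}\dots t_{-1}$ and $r$ the integer with decimal digits $t_b\dots t_0$; configurations $(q,t)$ are encoded as $\varphi(q,t)=\frac{1}{2^q3^r5^s}\in[0,1]$. $\Delta$ is the global one-step transition function on configurations, extended by $\Delta(q_{halt},t)=(q_{halt},t)$. The initial configurations (state $q_0$) are identified with their encodings and listed as $c_0>c_1>\cdots$; $\Delta^l(c_i)\in[0,1]$ denotes the encoding of the configuration after $l$ steps starting from $c_i$. *)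

theory Defs
  imports "HOL-Analysis.Analysis"
begin

text \<open>A tape is a function int => nat; position 0 is the head position.
  A configuration is a pair (state, tape).\<close>

type_synonym tape = "int \<Rightarrow> nat"
type_synonym config = "nat \<times> tape"

definition valid_tape :: "tape \<Rightarrow> bool" where
  "valid_tape t \<longleftrightarrow> finite {k. t k \<noteq> 0} \<and> (\<forall>k. t k \<le> 9)"

definition tape_r :: "tape \<Rightarrow> nat" where
  "tape_r t = (\<Sum>k\<in>{k::nat. t (int k) \<noteq> 0}. t (int k) * 10 ^ k)"

definition tape_s :: "tape \<Rightarrow> nat" where
  "tape_s t = (\<Sum>k\<in>{k::nat. t (- int k - 1) \<noteq> 0}. t (- int k - 1) * 10 ^ k)"

definition enc :: "config \<Rightarrow> real" where
  "enc c = 1 / (2 ^ fst c * 3 ^ tape_r (snd c) * 5 ^ tape_s (snd c))"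

text \<open>Transition function: delta q a = (q', a', e) with new state q', written
  symbol a' and head move e in {-1,0,1}.\<close>

definition tm_wf :: "nat \<Rightarrow> (nat \<Rightarrow> nat \<Rightarrow> nat \<times> nat \<times> int) \<Rightarrow> nat \<Rightarrow> nat \<Rightarrow> bool" where
  "tm_wf m \<delta> q0 qh \<longleftrightarrow> q0 \<in> {1..m} \<and> qh \<in> {1..m} \<and>
     (\<forall>q\<in>{1..m}. \<forall>a\<le>9. fst (\<delta> q a) \<in> {1..m} \<and> fst (snd (\<delta> q a)) \<le> 9 \<and>
        snd (snd (\<delta> q a)) \<in> {-1, 0, 1})"

definition tm_step :: "(nat \<Rightarrow> nat \<Rightarrow> nat \<times> nat \<times> int) \<Rightarrow> nat \<Rightarrow> config \<Rightarrow> config" where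
  "tm_step \<delta> qh c =
     (if fst c = qh then c
      else (let (q', a', e) = \<delta> (fst c) (snd c 0);
                t' = (snd c)(0 := a')
            in (q', \<lambda>k. t' (k + e))))"

text \<open>Encodings of initial configurations, listed decreasingly as c_0 > c_1 > ...\<close>

definition init_encs :: "nat \<Rightarrow> real set" where
  "init_encs q0 = {enc (q0, t) | t. valid_tape t}"

definition init_c :: "nat \<Rightarrow> nat \<Rightarrow> real" where
  "init_c q0 i = (THE x. x \<in> init_encs q0 \<and> card {y \<in> init_encs q0. x < y} = i)"

definition init_conf :: "nat \<Rightarrow> nat \<Rightarrow> config" where
  "init_conf q0 i = (q0, THE t. valid_tape t \<and> enc (q0, t) = init_c q0 i)"

definition orbit_enc :: "(nat \<Rightarrow> nat \<Rightarrow> nat \<times> nat \<times> int) \<Rightarrow> nat \<Rightarrow> nat \<Rightarrow> nat \<Rightarrow> nat \<Rightarrow> real" where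
  "orbit_enc \<delta> qh q0 i l = enc ((tm_step \<delta> qh ^^ l) (init_conf q0 i))"

definition smooth_fun :: "(real \<Rightarrow> real) \<Rightarrow> bool" where
  "smooth_fun f \<longleftrightarrow> (\<forall>n x. ((deriv ^^ n) f) differentiable (at x))"

definition cx :: "(real \<Rightarrow> real \<times> real) \<Rightarrow> real \<Rightarrow> real" where
  "cx \<gamma> t = fst (\<gamma> t)"

definition cy :: "(real \<Rightarrow> real \<times> real) \<Rightarrow> real \<Rightarrow> real" where
  "cy \<gamma> t = snd (\<gamma> t)"

definition proper_embedded_curve :: "(real \<Rightarrow> real \<times> real) \<Rightarrow> (real \<times> real) set \<Rightarrow> bool" where
  "proper_embedded_curve \<gamma> S \<longleftrightarrow>
     smooth_fun (cx \<gamma>) \<and> smooth_fun (cy \<gamma>) \<and>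
     (\<forall>t. (deriv (cx \<gamma>) t, deriv (cy \<gamma>) t) \<noteq> (0, 0)) \<and>
     inj \<gamma> \<and> (\<exists>g. homeomorphism UNIV (range \<gamma>) \<gamma> g) \<and>
     range \<gamma> \<subseteq> S \<and>
     (\<forall>K. compact K \<longrightarrow> compact (\<gamma> -` K))"

definition unit_tangent_y :: "(real \<Rightarrow> real \<times> real) \<Rightarrow> real \<Rightarrow> real" where
  "unit_tangent_y \<gamma> t =
     deriv (cy \<gamma>) t / sqrt ((deriv (cx \<gamma>) t)\<^sup>2 + (deriv (cy \<gamma>) t)\<^sup>2)"

definition curvature :: "(real \<Rightarrow> real \<times> real) \<Rightarrow> real \<Rightarrow> real" where
  "curvature \<gamma> t =
     (deriv (cx \<gamma>) t * deriv (deriv (cy \<gamma>)) t - deriv (cy \<gamma>) t * deriv (deriv (cx \<gamma>)) t)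
     / ((deriv (cx \<gamma>) t)\<^sup>2 + (deriv (cy \<gamma>) t)\<^sup>2) powr (3/2)"

end

theory Submission
  imports Defs "HOL-Computational_Algebra.Polynomial"
begin

text \<open>The curve is the graph \<open>x = f(y)\<close> of a smooth function which equals \<open>\<Delta>\<^sup>l(c\<^sub>i) + 2i\<close> on
  \<open>(l - \<epsilon>, l + \<epsilon>)\<close> and on \<open>[l + \<epsilon>, l + 1 - \<epsilon>]\<close> moves to the next value along a rescaled smooth
  step \<open>T\<close>. All encodings lie in \<open>(0, 1]\<close>, so every jump is at most 1 and the curvature of the graph
  is bounded by \<open>|f''| \<le> max |T''| / (1 - 2\<epsilon>)\<^sup>2\<close>. For \<open>T\<close> take the quintic smoothstep
  \<open>6z\<^sup>5 - 15z\<^sup>4 + 10z\<^sup>3\<close>, whose second derivative is bounded by \<open>15/2\<close> on \<open>[0, 1]\<close>, and make it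
  flat at the endpoints by multiplying with a \<open>C\<^sup>\<infinity>\<close> step built from \<open>exp(-1/x)\<close> on a window of
  width \<open>d\<close>: since the quintic vanishes to third order there, this changes the second derivative
  by \<open>O(d)\<close> only.\<close>

section \<open>Smooth functions on the real line\<close>

definition differentiable_upto :: "nat \<Rightarrow> (real \<Rightarrow> real) \<Rightarrow> bool" where
  "differentiable_upto n f \<longleftrightarrow> (\<forall>j\<le>n. \<forall>x. (deriv ^^ j) f differentiable at x)"

lemma smooth_fun_iff_differentiable_upto: "smooth_fun f \<longleftrightarrow> (\<forall>n. differentiable_upto n f)"
  unfolding smooth_fun_def differentiable_upto_def by auto

lemma differentiable_upto_0: "differentiable_upto 0 f \<longleftrightarrow> (\<forall>x. f differentiable at x)"
  by (simp add: differentiable_upto_def)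

lemma differentiable_upto_Suc:
  "differentiable_upto (Suc n) f \<longleftrightarrow> (\<forall>x. f differentiable at x) \<and> differentiable_upto n (deriv f)"
proof -
  have "(\<forall>j\<le>Suc n. P j) \<longleftrightarrow> P 0 \<and> (\<forall>j\<le>n. P (Suc j))" for P
    by (metis Suc_le_mono le0 not0_implies_Suc)
  then show ?thesis
    unfolding differentiable_upto_def by (simp add: funpow_Suc_right del: funpow.simps)
qed

lemma differentiable_upto_imp_differentiable: "differentiable_upto n f \<Longrightarrow> f differentiable at x"
  by (cases n) (auto simp: differentiable_upto_0 differentiable_upto_Suc)

lemma differentiable_upto_SucD: "differentiable_upto (Suc n) f \<Longrightarrow> differentiable_upto n f"
  by (simp add: differentiable_upto_def)

lemma deriv_eqI: "(\<And>x. DERIV f x :> f' x) \<Longrightarrow> deriv f = f'"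
  by (rule ext) (rule DERIV_imp_deriv)

lemma DERIV_deriv_real: "f differentiable at x \<Longrightarrow> DERIV f x :> deriv f x"
  for f :: "real \<Rightarrow> real"
  by (simp add: DERIV_deriv_iff_real_differentiable)

lemma differentiable_upto_poly: "differentiable_upto n (poly p)"
proof (induction n arbitrary: p)
  case 0
  show ?case
    unfolding differentiable_upto_0 real_differentiable_def using poly_DERIV by blast
next
  case (Suc n)
  have "deriv (poly p) = poly (pderiv p)"
    by (rule deriv_eqI) (rule poly_DERIV)
  moreover have "poly p differentiable at x" for x
    unfolding real_differentiable_def using poly_DERIV by blast
  ultimately show ?case
    using Suc by (simp add: differentiable_upto_Suc)
qed

lemma differentiable_upto_const: "differentiable_upto n (\<lambda>x. c)"
proof -
  have "poly [:c:] = (\<lambda>x. c)" by auto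
  then show ?thesis using differentiable_upto_poly by metis
qed

lemma differentiable_upto_add:
  "differentiable_upto n f \<Longrightarrow> differentiable_upto n g \<Longrightarrow> differentiable_upto n (\<lambda>x. f x + g x)"
proof (induction n arbitrary: f g)
  case 0
  then show ?case by (auto simp: differentiable_upto_0)
next
  case (Suc n)
  have df: "\<And>x. f differentiable at x" and dg: "\<And>x. g differentiable at x"
    using Suc.prems by (auto simp: differentiable_upto_Suc)
  have "deriv (\<lambda>x. f x + g x) = (\<lambda>x. deriv f x + deriv g x)"
    by (rule deriv_eqI) (intro derivative_intros DERIV_deriv_real df dg)
  then show ?case
    using Suc df dg by (auto simp: differentiable_upto_Suc)
qed

lemma differentiable_upto_mult:
  "differentiable_upto n f \<Longrightarrow> differentiable_upto n g \<Longrightarrow> differentiable_upto n (\<lambda>x. f x * g x)"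
proof (induction n arbitrary: f g)
  case 0
  then show ?case by (auto simp: differentiable_upto_0)
next
  case (Suc n)
  have df: "\<And>x. f differentiable at x" and dg: "\<And>x. g differentiable at x"
    using Suc.prems by (auto simp: differentiable_upto_Suc)
  have "deriv (\<lambda>x. f x * g x) = (\<lambda>x. deriv f x * g x + f x * deriv g x)"
    by (rule deriv_eqI) (auto intro!: derivative_eq_intros DERIV_deriv_real df dg)
  moreover have "differentiable_upto n f" "differentiable_upto n g"
    "differentiable_upto n (deriv f)" "differentiable_upto n (deriv g)"
    using Suc.prems by (auto simp: differentiable_upto_Suc intro: differentiable_upto_SucD)
  ultimately show ?case
    using Suc df dg by (auto simp: differentiable_upto_Suc intro!: differentiable_upto_add)
qed

lemma differentiable_upto_compose_affine:
  "differentiable_upto n f \<Longrightarrow> differentiable_upto n (\<lambda>x. f (a * x + b))"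
proof (induction n arbitrary: f)
  have chain: "DERIV (\<lambda>x. f (a * x + b)) x :> a * deriv f (a * x + b)"
    if "\<And>x. f differentiable at x" for f x
  proof -
    have "DERIV (\<lambda>x. a * x + b) x :> a" by (auto intro!: derivative_eq_intros)
    from DERIV_chain2[OF DERIV_deriv_real[OF that] this] show ?thesis by (simp add: mult.commute)
  qed
  {
    case 0
    then show ?case
      using chain unfolding differentiable_upto_0 real_differentiable_def by blast
  next
    case (Suc n)
    have D: "DERIV (\<lambda>x. f (a * x + b)) x :> a * deriv f (a * x + b)" for x
      using Suc.prems by (intro chain) (simp add: differentiable_upto_Suc)
    then have "deriv (\<lambda>x. f (a * x + b)) = (\<lambda>x. a * deriv f (a * x + b))"
      by (rule deriv_eqI)
    moreover have "differentiable_upto n (\<lambda>x. deriv f (a * x + b))"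
      using Suc by (simp add: differentiable_upto_Suc)
    ultimately show ?case
      using D by (auto simp: differentiable_upto_Suc real_differentiable_def
          intro!: differentiable_upto_mult differentiable_upto_const)
  }
qed

text \<open>Smoothness of \<open>1 / g\<close>: the derivative of \<open>c * g\<^sup>-\<^sup>k\<close> is again of this form, with \<open>k + 1\<close>
  and with a coefficient of one order less of differentiability.\<close>

lemma DERIV_mult_inverse_power:
  assumes "DERIV c x :> c'" and "DERIV g x :> g'" and "g x \<noteq> 0"
  shows "DERIV (\<lambda>x. c x * inverse (g x) ^ k) x :>
      c' * inverse (g x) ^ k + (- real k * c x * g') * inverse (g x) ^ (k + 1)"
proof -
  have D: "DERIV (\<lambda>x. c x * inverse (g x) ^ k) x :> c' * inverse (g x) ^ k
      + of_nat k * (- (g' * inverse (g x ^ Suc (Suc 0))) * inverse (g x) ^ (k - Suc 0)) * c x"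
    using DERIV_mult[OF assms(1) DERIV_power[OF DERIV_inverse_fun[OF assms(2,3)]]] .
  have eq: "of_nat k * (- (g' * inverse (g x ^ Suc (Suc 0))) * inverse (g x) ^ (k - Suc 0)) * c x
      = (- real k * c x * g') * inverse (g x) ^ (k + 1)"
  proof (cases k)
    case (Suc j)
    have "inverse (g x) ^ (k + 1) = inverse (g x ^ Suc (Suc 0)) * inverse (g x) ^ j"
      unfolding Suc by (simp add: power_inverse[symmetric] mult_ac)
    then show ?thesis using Suc by (simp add: algebra_simps)
  qed simp
  from D show ?thesis unfolding eq .
qed

lemma differentiable_upto_mult_inverse_power:
  assumes g: "smooth_fun g" and nz: "\<And>x. g x \<noteq> 0"
  shows "differentiable_upto n c \<Longrightarrow> differentiable_upto n (\<lambda>x. c x * inverse (g x) ^ k)"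
proof (induction n arbitrary: c k)
  have dg: "\<And>x. DERIV g x :> deriv g x"
    using g by (auto simp: smooth_fun_iff_differentiable_upto
        intro: DERIV_deriv_real differentiable_upto_imp_differentiable)
  {
    case 0
    then show ?case
      using DERIV_mult_inverse_power[OF DERIV_deriv_real dg nz]
      unfolding differentiable_upto_0 real_differentiable_def by blast
  next
    case (Suc n)
    have dc: "\<And>x. c differentiable at x"
      using Suc.prems by (auto simp: differentiable_upto_Suc)
    have D: "DERIV (\<lambda>x. c x * inverse (g x) ^ k) x :>
        deriv c x * inverse (g x) ^ k + (- real k * c x * deriv g x) * inverse (g x) ^ (k + 1)" for x
      by (rule DERIV_mult_inverse_power[OF DERIV_deriv_real[OF dc] dg nz])
    have c: "differentiable_upto n (deriv c)" "differentiable_upto n c"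
      using Suc.prems by (auto simp: differentiable_upto_Suc intro: differentiable_upto_SucD)
    have "differentiable_upto n (deriv g)"
      using g differentiable_upto_Suc unfolding smooth_fun_iff_differentiable_upto by blast
    then have "differentiable_upto n (\<lambda>x. deriv c x * inverse (g x) ^ k
        + (- real k * c x * deriv g x) * inverse (g x) ^ (k + 1))"
      by (intro differentiable_upto_add Suc.IH c differentiable_upto_mult differentiable_upto_const)
    moreover have "deriv (\<lambda>x. c x * inverse (g x) ^ k) = (\<lambda>x. deriv c x * inverse (g x) ^ k
        + (- real k * c x * deriv g x) * inverse (g x) ^ (k + 1))"
      using D by (rule deriv_eqI)
    ultimately show ?case
      using D by (auto simp: differentiable_upto_Suc real_differentiable_def)
  }
qed

lemma smooth_fun_add: "smooth_fun f \<Longrightarrow> smooth_fun g \<Longrightarrow> smooth_fun (\<lambda>x. f x + g x)"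
  by (simp add: smooth_fun_iff_differentiable_upto differentiable_upto_add)

lemma smooth_fun_mult: "smooth_fun f \<Longrightarrow> smooth_fun g \<Longrightarrow> smooth_fun (\<lambda>x. f x * g x)"
  by (simp add: smooth_fun_iff_differentiable_upto differentiable_upto_mult)

lemma smooth_fun_poly: "smooth_fun (poly p)"
  by (simp add: smooth_fun_iff_differentiable_upto differentiable_upto_poly)

lemma smooth_fun_const: "smooth_fun (\<lambda>x. c)"
  by (simp add: smooth_fun_iff_differentiable_upto differentiable_upto_const)

lemma smooth_fun_diff: "smooth_fun f \<Longrightarrow> smooth_fun g \<Longrightarrow> smooth_fun (\<lambda>x. f x - g x)"
  using smooth_fun_add[of f "\<lambda>x. - 1 * g x"] smooth_fun_mult[OF smooth_fun_const, of g "- 1"]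
  by simp

lemma smooth_fun_compose_affine: "smooth_fun f \<Longrightarrow> smooth_fun (\<lambda>x. f (a * x + b))"
  by (simp add: smooth_fun_iff_differentiable_upto differentiable_upto_compose_affine)

lemma smooth_fun_compose_shift_scale:
  assumes "smooth_fun f"
  shows "smooth_fun (\<lambda>x. f ((x - c) / s))"
proof -
  have "(\<lambda>x. f ((x - c) / s)) = (\<lambda>x. f (inverse s * x + - c / s))"
    by (simp add: divide_inverse algebra_simps)
  then show ?thesis
    using smooth_fun_compose_affine[OF assms] by metis
qed

lemma smooth_fun_inverse:
  "smooth_fun g \<Longrightarrow> (\<And>x. g x \<noteq> 0) \<Longrightarrow> smooth_fun (\<lambda>x. inverse (g x))"
  using differentiable_upto_mult_inverse_power[where c = "\<lambda>_. 1" and k = 1]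
  by (simp add: smooth_fun_iff_differentiable_upto differentiable_upto_const)

lemma smooth_fun_deriv: "smooth_fun f \<Longrightarrow> smooth_fun (deriv f)"
  unfolding smooth_fun_iff_differentiable_upto using differentiable_upto_Suc by blast

lemma smooth_fun_DERIV: "smooth_fun f \<Longrightarrow> DERIV f x :> deriv f x"
  unfolding smooth_fun_iff_differentiable_upto
  using DERIV_deriv_real differentiable_upto_imp_differentiable by blast

lemma smooth_fun_isCont: "smooth_fun f \<Longrightarrow> isCont f x"
  using smooth_fun_DERIV DERIV_isCont by blast

lemma smooth_fun_if_locally_smooth:
  assumes "\<And>y. \<exists>S g. open S \<and> y \<in> S \<and> smooth_fun g \<and> (\<forall>z\<in>S. f z = g z)"
  shows "smooth_fun f"
  unfolding smooth_fun_def
proof (intro allI)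
  fix n and y :: real
  obtain S g where S: "open S" "y \<in> S" "smooth_fun g" "\<forall>z\<in>S. f z = g z"
    using assms by blast
  have "DERIV ((deriv ^^ n) g) y :> deriv ((deriv ^^ n) g) y"
    using S(3) by (simp add: smooth_fun_def DERIV_deriv_real)
  moreover have "(deriv ^^ n) g z = (deriv ^^ n) f z" if "z \<in> S" for z
    using S that by (intro higher_deriv_cong_ev) (auto simp: eventually_nhds)
  ultimately have "DERIV ((deriv ^^ n) f) y :> deriv ((deriv ^^ n) g) y"
    by (rule has_field_derivative_transform_within_open[OF _ S(1) S(2)])
  then show "(deriv ^^ n) f differentiable at y"
    by (auto simp: real_differentiable_def)
qed

lemma deriv_eq_on_open:
  assumes "open S" "x \<in> S" "\<And>y. y \<in> S \<Longrightarrow> f y = g y"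
  shows "deriv f x = deriv g x"
  using assms by (intro deriv_cong_ev) (auto simp: eventually_nhds)

lemma deriv2_eq_on_open:
  assumes "open S" "x \<in> S" "\<And>y. y \<in> S \<Longrightarrow> f y = g y"
  shows "deriv (deriv f) x = deriv (deriv g) x"
  using higher_deriv_cong_ev[of f g x x 2] assms
  by (auto simp: eventually_nhds numeral_2_eq_2)

lemma DERIV_compose_shift_scale:
  "DERIV f ((x - c) / s) :> f' \<Longrightarrow> DERIV (\<lambda>x. f ((x - c) / s)) x :> f' / s"
proof -
  assume "DERIV f ((x - c) / s) :> f'"
  moreover have "DERIV (\<lambda>x. x - c) x :> 1"
    by (auto intro!: derivative_eq_intros)
  then have "DERIV (\<lambda>x. (x - c) / s) x :> 1 / s"
    by (rule DERIV_cdivide)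
  ultimately show ?thesis
    using DERIV_chain2 by fastforce
qed

lemma deriv_compose_shift_scale:
  "smooth_fun f \<Longrightarrow> deriv (\<lambda>x. f ((x - c) / s)) = (\<lambda>x. deriv f ((x - c) / s) / s)"
  by (intro deriv_eqI DERIV_compose_shift_scale smooth_fun_DERIV)

lemma deriv2_mult:
  assumes "smooth_fun u" "smooth_fun v"
  shows "deriv (deriv (\<lambda>x. u x * v x)) x
    = deriv (deriv u) x * v x + 2 * (deriv u x * deriv v x) + u x * deriv (deriv v) x"
proof -
  have "deriv (\<lambda>x. u x * v x) = (\<lambda>x. deriv u x * v x + u x * deriv v x)"
    using assms by (intro deriv_eqI) (auto intro!: derivative_eq_intros smooth_fun_DERIV)
  moreover have "DERIV (\<lambda>x. deriv u x * v x + u x * deriv v x) x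
      :> deriv (deriv u) x * v x + 2 * (deriv u x * deriv v x) + u x * deriv (deriv v) x"
    using assms by (auto intro!: derivative_eq_intros smooth_fun_DERIV smooth_fun_deriv)
  ultimately show ?thesis
    by (simp add: DERIV_imp_deriv)
qed

lemma deriv2_point_reflection:
  assumes "smooth_fun f"
  shows "deriv (deriv (\<lambda>x. c - f (a - x))) x = - deriv (deriv f) (a - x)"
proof -
  have "deriv (\<lambda>x. c - f (a - x)) = (\<lambda>x. deriv f (a - x))"
    using assms by (intro deriv_eqI)
      (auto intro!: derivative_eq_intros DERIV_chain2[OF smooth_fun_DERIV])
  moreover have "DERIV (\<lambda>x. deriv f (a - x)) x :> deriv (deriv f) (a - x) * - 1"
    using DERIV_chain2[OF smooth_fun_DERIV[OF smooth_fun_deriv[OF assms]] DERIV_diff[OF DERIV_const DERIV_ident]]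
    by simp
  ultimately show ?thesis
    by (simp add: DERIV_imp_deriv)
qed

lemma bounded_if_continuous_vanishing_outside:
  fixes u :: "real \<Rightarrow> real"
  assumes "\<And>x. isCont u x" and "\<And>z. z \<notin> {a..b} \<Longrightarrow> u z = 0"
  shows "\<exists>M. \<forall>z. \<bar>u z\<bar> \<le> M"
proof -
  have "compact (u ` {a..b})"
    using assms(1) by (intro compact_continuous_image continuous_at_imp_continuous_on) auto
  then have "bounded (u ` {a..b})"
    by (rule compact_imp_bounded)
  then obtain M where M: "\<forall>y\<in>u ` {a..b}. \<bar>y\<bar> \<le> M"
    by (auto simp: bounded_real)
  have "\<bar>u z\<bar> \<le> max M 0" for z
    using M assms(2)[of z] by (cases "z \<in> {a..b}") force+
  then show ?thesis by blast
qed

section \<open>Smooth steps\<close>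

locale smooth_step =
  fixes T :: "real \<Rightarrow> real"
  assumes smooth: "smooth_fun T"
    and eq_0_if_nonpos: "z \<le> 0 \<Longrightarrow> T z = 0"
    and eq_1_if_ge_1: "1 \<le> z \<Longrightarrow> T z = 1"
begin

lemma deriv_eq_0_outside: "z \<notin> {0..1} \<Longrightarrow> deriv T z = 0"
  and deriv2_eq_0_outside: "z \<notin> {0..1} \<Longrightarrow> deriv (deriv T) z = 0"
proof -
  assume "z \<notin> {0..1}"
  then consider "z \<in> {..<0}" | "z \<in> {1<..}" by force
  then obtain S c where S: "open S" "z \<in> S" "\<And>y. y \<in> S \<Longrightarrow> T y = c"
    using eq_0_if_nonpos eq_1_if_ge_1
    by (metis greaterThan_iff lessThan_iff less_imp_le open_greaterThan open_lessThan)
  show "deriv T z = 0"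
    using deriv_eq_on_open[OF S(1,2), of T "\<lambda>_. c"] S(3) by simp
  show "deriv (deriv T) z = 0"
    using deriv2_eq_on_open[OF S(1,2), of T "\<lambda>_. c"] S(3) by simp
qed

lemma bounded_deriv: "\<exists>M. \<forall>z. \<bar>deriv T z\<bar> \<le> M"
  using smooth by (intro bounded_if_continuous_vanishing_outside deriv_eq_0_outside
      smooth_fun_isCont smooth_fun_deriv)

lemma bounded_deriv2: "\<exists>M. \<forall>z. \<bar>deriv (deriv T) z\<bar> \<le> M"
  using smooth by (intro bounded_if_continuous_vanishing_outside deriv2_eq_0_outside
      smooth_fun_isCont smooth_fun_deriv)

end

definition flat_exp :: "real poly \<Rightarrow> real \<Rightarrow> real" where
  "flat_exp p x = (if x \<le> 0 then 0 else poly p (inverse x) * exp (- inverse x))"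

text \<open>\<open>(p(1/x) e\<^sup>-\<^sup>1\<^sup>/\<^sup>x)' = q(1/x) e\<^sup>-\<^sup>1\<^sup>/\<^sup>x\<close> with \<open>q(u) = u\<^sup>2 (p(u) - p'(u))\<close>.\<close>

definition flat_exp_deriv_poly :: "real poly \<Rightarrow> real poly" where
  "flat_exp_deriv_poly p = [:0, 0, 1:] * (p - pderiv p)"

lemma tendsto_poly_inverse_exp_at_right_0:
  "((\<lambda>y. poly p (inverse y) * exp (- inverse y)) \<longlongrightarrow> (0::real)) (at_right 0)"
proof -
  have "((\<lambda>u. \<Sum>i\<le>degree p. coeff p i * (u ^ i / exp u)) \<longlongrightarrow> (\<Sum>i\<le>degree p. coeff p i * 0)) at_top"
    by (intro tendsto_sum tendsto_mult tendsto_const tendsto_power_div_exp_0)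
  moreover have "(\<lambda>u. \<Sum>i\<le>degree p. coeff p i * (u ^ i / exp u)) = (\<lambda>u. poly p u * exp (- u))"
    by (auto simp: poly_altdef sum_divide_distrib exp_minus field_simps)
  ultimately have "((\<lambda>u. poly p u * exp (- u)) \<longlongrightarrow> 0) at_top"
    by simp
  from filterlim_compose[OF this filterlim_inverse_at_top_right] show ?thesis
    by (simp add: o_def)
qed

lemma DERIV_flat_exp: "DERIV (flat_exp p) x :> flat_exp (flat_exp_deriv_poly p) x"
proof (cases "0 < x")
  case True
  have "DERIV (\<lambda>x. poly p (inverse x) * exp (- inverse x)) x :>
     poly (pderiv p) (inverse x) * (- (inverse x * inverse x)) * exp (- inverse x)
     + poly p (inverse x) * (exp (- inverse x) * (inverse x * inverse x))"
    using True
    by (auto intro!: derivative_eq_intros DERIV_chain2[OF poly_DERIV] simp: power2_eq_square)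
  moreover have "poly (pderiv p) (inverse x) * (- (inverse x * inverse x)) * exp (- inverse x)
     + poly p (inverse x) * (exp (- inverse x) * (inverse x * inverse x))
     = flat_exp (flat_exp_deriv_poly p) x"
    using True by (simp add: flat_exp_def flat_exp_deriv_poly_def algebra_simps)
  ultimately have "DERIV (\<lambda>x. poly p (inverse x) * exp (- inverse x)) x :>
      flat_exp (flat_exp_deriv_poly p) x"
    by simp
  then show ?thesis
    by (rule has_field_derivative_transform_within_open[where S = "{0<..}"])
      (use True in \<open>auto simp: flat_exp_def\<close>)
next
  case False
  show ?thesis
  proof (cases "x < 0")
    case True
    have "DERIV (\<lambda>x. 0) x :> flat_exp (flat_exp_deriv_poly p) x"
      using True by (simp add: flat_exp_def)
    then show ?thesis
      by (rule has_field_derivative_transform_within_open[where S = "{..<0}"])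
        (use True in \<open>auto simp: flat_exp_def\<close>)
  next
    case False
    with \<open>\<not> 0 < x\<close> have x: "x = 0" by simp
    have "((\<lambda>y. (flat_exp p y - flat_exp p 0) / (y - 0)) \<longlongrightarrow> 0) (at 0)"
    proof (rule filterlim_split_at)
      show "((\<lambda>y. (flat_exp p y - flat_exp p 0) / (y - 0)) \<longlongrightarrow> 0) (at_left 0)"
        by (rule tendsto_eventually)
          (auto simp: flat_exp_def eventually_at_left_field intro: exI[of _ "-1"])
      have "eventually (\<lambda>y. poly ([:0, 1:] * p) (inverse y) * exp (- inverse y)
          = (flat_exp p y - flat_exp p 0) / (y - 0)) (at_right 0)"
        unfolding eventually_at_right_field
        by (intro exI[of _ 1]) (simp add: flat_exp_def divide_inverse algebra_simps)
      from Lim_transform_eventually[OF tendsto_poly_inverse_exp_at_right_0 this]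
      show "((\<lambda>y. (flat_exp p y - flat_exp p 0) / (y - 0)) \<longlongrightarrow> 0) (at_right 0)" .
    qed
    then show ?thesis
      using x by (simp add: has_field_derivative_iff flat_exp_def)
  qed
qed

lemma smooth_fun_flat_exp: "smooth_fun (flat_exp p)"
proof -
  have "differentiable_upto n (flat_exp p)" for n
  proof (induction n arbitrary: p)
    case 0
    then show ?case
      using DERIV_flat_exp by (auto simp: differentiable_upto_0 real_differentiable_def)
  next
    case (Suc n)
    have "deriv (flat_exp p) = flat_exp (flat_exp_deriv_poly p)"
      by (rule deriv_eqI) (rule DERIV_flat_exp)
    then show ?case
      using Suc DERIV_flat_exp by (auto simp: differentiable_upto_Suc real_differentiable_def)
  qed
  then show ?thesis
    by (simp add: smooth_fun_iff_differentiable_upto)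
qed

lemma flat_exp_1_pos: "0 < x \<Longrightarrow> 0 < flat_exp 1 x"
  and flat_exp_1_nonneg: "0 \<le> flat_exp 1 x"
  and flat_exp_nonpos: "x \<le> 0 \<Longrightarrow> flat_exp p x = 0"
  by (simp_all add: flat_exp_def)

definition flat_step :: "real \<Rightarrow> real" where
  "flat_step x = flat_exp 1 x / (flat_exp 1 x + flat_exp 1 (1 - x))"

lemma flat_step_denominator_pos: "0 < flat_exp 1 x + flat_exp 1 (1 - x)"
  using flat_exp_1_pos[of x] flat_exp_1_pos[of "1 - x"] flat_exp_1_nonneg[of x]
    flat_exp_1_nonneg[of "1 - x"]
  by (cases "0 < x") auto

interpretation flat_step: smooth_step flat_step
proof
  have "smooth_fun (\<lambda>x. flat_exp 1 (1 - x))"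
    using smooth_fun_compose_affine[OF smooth_fun_flat_exp, of 1 "- 1" 1] by simp
  then have "smooth_fun (\<lambda>x. flat_exp 1 x * inverse (flat_exp 1 x + flat_exp 1 (1 - x)))"
    using flat_step_denominator_pos
    by (intro smooth_fun_mult smooth_fun_inverse smooth_fun_add smooth_fun_flat_exp)
      (auto simp: less_le)
  then show "smooth_fun flat_step"
    by (simp add: flat_step_def[abs_def] divide_inverse)
  show "flat_step z = 0" if "z \<le> 0" for z
    using that by (simp add: flat_step_def flat_exp_nonpos)
  show "flat_step z = 1" if "1 \<le> z" for z
    using that flat_exp_1_pos[of z] by (simp add: flat_step_def flat_exp_nonpos)
qed

lemma flat_step_range: "0 \<le> flat_step x \<and> flat_step x \<le> 1"
  using flat_step_denominator_pos[of x] flat_exp_1_nonneg[of x] flat_exp_1_nonneg[of "1 - x"]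
  by (simp add: flat_step_def field_simps)

definition quintic :: "real \<Rightarrow> real" where
  "quintic z = 6 * z ^ 5 - 15 * z ^ 4 + 10 * z ^ 3"

definition quintic' :: "real \<Rightarrow> real" where
  "quintic' z = 30 * z ^ 4 - 60 * z ^ 3 + 30 * z ^ 2"

definition quintic'' :: "real \<Rightarrow> real" where
  "quintic'' z = 120 * z ^ 3 - 180 * z ^ 2 + 60 * z"

lemma deriv_quintic: "deriv quintic = quintic'"
  and deriv_quintic': "deriv quintic' = quintic''"
  unfolding quintic_def[abs_def] quintic'_def[abs_def] quintic''_def[abs_def]
  by (auto intro!: deriv_eqI derivative_eq_intros simp: algebra_simps)

lemma smooth_fun_quintic: "smooth_fun quintic"
proof -
  have "quintic = poly [:0, 0, 0, 10, - 15, 6:]"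
    by (auto simp: quintic_def algebra_simps power_numeral_reduce)
  then show ?thesis
    by (metis smooth_fun_poly)
qed

lemma quintic_reflect: "quintic (1 - z) = 1 - quintic z"
  unfolding quintic_def by algebra

lemma quintic_bounds:
  assumes "0 \<le> z" "z \<le> 1"
  shows "0 \<le> quintic z" "quintic z \<le> 10 * z ^ 3" "0 \<le> quintic' z" "quintic' z \<le> 30 * z ^ 2"
    "\<bar>quintic'' z\<bar> \<le> 60 * z" "\<bar>quintic'' z\<bar> \<le> 15 / 2"
proof -
  have "quintic z = z ^ 3 * (6 * (z - 5/4) ^ 2 + 5/8)"
    unfolding quintic_def by algebra
  then show "0 \<le> quintic z"
    using assms by simp
  have "10 * z ^ 3 - quintic z = z ^ 4 * (15 - 6 * z)"
    unfolding quintic_def by algebra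
  then show "quintic z \<le> 10 * z ^ 3"
    using assms by (smt (verit) mult_nonneg_nonneg zero_le_power)
  have "quintic' z = 30 * z ^ 2 * (z - 1) ^ 2"
    unfolding quintic'_def by algebra
  then show "0 \<le> quintic' z"
    by simp
  have "30 * z ^ 2 - quintic' z = 30 * z ^ 3 * (2 - z)"
    unfolding quintic'_def by algebra
  then show "quintic' z \<le> 30 * z ^ 2"
    using assms by (smt (verit) mult_nonneg_nonneg zero_le_power)
  have "quintic'' z = 60 * z * (2 * z ^ 2 - 3 * z + 1)"
    unfolding quintic''_def by algebra
  moreover have "\<bar>2 * z ^ 2 - 3 * z + 1\<bar> \<le> 1"
  proof -
    have "2 * z ^ 2 - 3 * z + 1 = 2 * (z - 3/4) ^ 2 - 1/8"
      by algebra
    moreover have "z ^ 2 \<le> z"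
      using assms by (simp add: power2_eq_square mult_left_le)
    moreover have "0 \<le> (z - 3/4) ^ 2"
      by simp
    ultimately show ?thesis
      using assms unfolding abs_le_iff by linarith
  qed
  ultimately show "\<bar>quintic'' z\<bar> \<le> 60 * z"
    using assms by (simp add: abs_mult mult_left_le)
  text \<open>With \<open>u = |1 - 2z|\<close>: \<open>|quintic'' z| = 15 u (1 - u\<^sup>2)\<close> and \<open>u (1 - u\<^sup>2) \<le> 1/2\<close> for \<open>0 \<le> u \<le> 1\<close>.\<close>
  define u where "u = \<bar>1 - 2 * z\<bar>"
  have "quintic'' z = 15 * ((1 - 2 * z) * (1 - (1 - 2 * z) ^ 2))"
    unfolding quintic''_def by algebra
  moreover have "(1 - 2 * z) ^ 2 \<le> 1"
    using assms by (simp add: abs_square_le_1)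
  ultimately have "\<bar>quintic'' z\<bar> = 15 * (u * (1 - u ^ 2))"
    unfolding u_def by (simp add: abs_mult)
  moreover have "2 - 4 * (u * (1 - u ^ 2)) = (2 * u - 1) ^ 2 * (u + 1) + (1 - u)"
    by algebra
  moreover have "0 \<le> (2 * u - 1) ^ 2 * (u + 1) + (1 - u)"
    using assms by (simp add: u_def)
  ultimately show "\<bar>quintic'' z\<bar> \<le> 15 / 2"
    by linarith
qed

lemma quintic_le_1: "0 \<le> z \<Longrightarrow> z \<le> 1 \<Longrightarrow> quintic z \<le> 1"
  using quintic_bounds(1)[of "1 - z"] quintic_reflect[of z] by simp

lemma (in smooth_step) deriv2_mult_quintic:
  "deriv (deriv (\<lambda>z. T (z / d) * quintic z)) z
    = deriv (deriv T) (z / d) / d / d * quintic z + 2 * (deriv T (z / d) / d * quintic' z)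
      + T (z / d) * quintic'' z"
proof -
  have d1: "deriv (\<lambda>z. T (z / d)) = (\<lambda>z. deriv T (z / d) / d)"
    using deriv_compose_shift_scale[OF smooth, of 0 d] by simp
  have "DERIV (\<lambda>z. deriv T ((z - 0) / d) / d) x :> deriv (deriv T) ((x - 0) / d) / d / d" for x
    by (intro DERIV_cdivide DERIV_compose_shift_scale smooth_fun_DERIV smooth_fun_deriv smooth)
  then have d2: "deriv (\<lambda>z. deriv T (z / d) / d) = (\<lambda>z. deriv (deriv T) (z / d) / d / d)"
    by (intro deriv_eqI) simp
  show ?thesis
    using deriv2_mult[OF smooth_fun_compose_shift_scale[OF smooth, of 0 d] smooth_fun_quintic]
    by (simp add: d1 d2 deriv_quintic deriv_quintic')
qed

text \<open>On the window \<open>[0, d]\<close> the factors \<open>1/d\<^sup>2\<close> and \<open>1/d\<close> coming from \<open>T(z/d)\<close> are compensated by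
  \<open>quintic z \<le> 10 d\<^sup>3\<close> and \<open>quintic' z \<le> 30 d\<^sup>2\<close>.\<close>

lemma (in smooth_step) abs_deriv2_mult_quintic_le_window:
  assumes range: "\<And>z. 0 \<le> T z \<and> T z \<le> 1"
    and M1: "\<And>z. \<bar>deriv T z\<bar> \<le> M1" and M2: "\<And>z. \<bar>deriv (deriv T) z\<bar> \<le> M2"
    and d: "0 < d" "d \<le> 1" and z: "0 \<le> z" "z \<le> d"
  shows "\<bar>deriv (deriv (\<lambda>z. T (z / d) * quintic z)) z\<bar> \<le> d * (10 * M2 + 60 * M1 + 60)"
proof -
  have z1: "z \<le> 1"
    using z d by simp
  note quintic = quintic_bounds[OF z(1) z1]
  have "\<bar>deriv (deriv T) (z / d) / d / d * quintic z\<bar> \<le> M2 * (10 * d)"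
  proof -
    have "quintic z / (d * d) \<le> 10 * d ^ 3 / (d * d)"
      using quintic(2) power_mono[OF z(2,1), of 3] d(1) by (intro divide_right_mono) auto
    then have "quintic z / (d * d) \<le> 10 * d"
      using d(1) by (simp add: power3_eq_cube)
    then have "\<bar>deriv (deriv T) (z / d)\<bar> * (quintic z / (d * d)) \<le> M2 * (10 * d)"
      using M2[of "z / d"] quintic(1) d(1) by (intro mult_mono) auto
    then show ?thesis
      using quintic(1) d(1) by (simp add: abs_mult)
  qed
  moreover have "\<bar>deriv T (z / d) / d * quintic' z\<bar> \<le> M1 * (30 * d)"
  proof -
    have "quintic' z / d \<le> 30 * d ^ 2 / d"
      using quintic(4) power_mono[OF z(2,1), of 2] d(1) by (intro divide_right_mono) auto
    then have "quintic' z / d \<le> 30 * d"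
      using d(1) by (simp add: power2_eq_square)
    then have "\<bar>deriv T (z / d)\<bar> * (quintic' z / d) \<le> M1 * (30 * d)"
      using M1[of "z / d"] quintic(3) d(1) by (intro mult_mono) auto
    then show ?thesis
      using quintic(3) d(1) by (simp add: abs_mult)
  qed
  moreover have "\<bar>T (z / d) * quintic'' z\<bar> \<le> 1 * (60 * d)"
    unfolding abs_mult using range[of "z / d"] quintic(5) z(2) by (intro mult_mono) auto
  ultimately have "\<bar>deriv (deriv (\<lambda>z. T (z / d) * quintic z)) z\<bar>
      \<le> M2 * (10 * d) + 2 * (M1 * (30 * d)) + 1 * (60 * d)"
    unfolding deriv2_mult_quintic by (smt (verit))
  then show ?thesis
    by (simp add: algebra_simps)
qed

lemma (in smooth_step) abs_deriv2_flattened_quintic_le: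
  assumes range: "\<And>z. 0 \<le> T z \<and> T z \<le> 1"
    and M1: "\<And>z. \<bar>deriv T z\<bar> \<le> M1" and M2: "\<And>z. \<bar>deriv (deriv T) z\<bar> \<le> M2"
    and d: "0 < d" "d \<le> 1/4" "d * (10 * M2 + 60 * M1 + 60) \<le> 1"
    and z: "z < 1"
  shows "\<bar>deriv (deriv (\<lambda>z. T (z / d) * quintic z)) z\<bar> \<le> 15 / 2"
proof -
  consider "z < 0" | "0 \<le> z" "z \<le> d" | "d < z"
    by linarith
  then show ?thesis
  proof cases
    case 1
    then have "z / d \<notin> {0..1}"
      using d divide_neg_pos[OF 1 d(1)] by simp
    then show ?thesis
      using 1 d deriv_eq_0_outside deriv2_eq_0_outside eq_0_if_nonpos
      by (simp add: deriv2_mult_quintic divide_nonpos_pos)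
  next
    case 2
    then show ?thesis
      using abs_deriv2_mult_quintic_le_window[OF range M1 M2, of d z] d by simp
  next
    case 3
    then have "z / d \<notin> {0..1}" "1 \<le> z / d"
      using d by auto
    then show ?thesis
      using 3 z d quintic_bounds(6)[of z] deriv_eq_0_outside deriv2_eq_0_outside eq_1_if_ge_1
      by (simp add: deriv2_mult_quintic)
  qed
qed

definition flattened_quintic :: "real \<Rightarrow> real \<Rightarrow> real" where
  "flattened_quintic d z = flat_step (z / d) * quintic z"

definition quintic_step :: "real \<Rightarrow> real \<Rightarrow> real" where
  "quintic_step d z = (if z \<le> 1/2 then flattened_quintic d z else 1 - flattened_quintic d (1 - z))"

lemma smooth_fun_flattened_quintic: "smooth_fun (flattened_quintic d)"
  unfolding flattened_quintic_def[abs_def]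
  using smooth_fun_compose_shift_scale[OF flat_step.smooth, of 0 d]
  by (intro smooth_fun_mult smooth_fun_quintic) simp

lemma flattened_quintic_eq_quintic: "0 < d \<Longrightarrow> d < z \<Longrightarrow> flattened_quintic d z = quintic z"
  using flat_step.eq_1_if_ge_1[of "z / d"] by (simp add: flattened_quintic_def)

lemma flattened_quintic_eq_0: "0 < d \<Longrightarrow> z \<le> 0 \<Longrightarrow> flattened_quintic d z = 0"
  using flat_step.eq_0_if_nonpos[of "z / d"] by (simp add: flattened_quintic_def divide_nonpos_pos)

lemma flattened_quintic_range:
  assumes "0 < d" "z \<le> 1"
  shows "0 \<le> flattened_quintic d z \<and> flattened_quintic d z \<le> 1"
proof (cases "z \<le> 0")
  case False
  then show ?thesis
    using assms flat_step_range[of "z / d"] quintic_bounds(1) quintic_le_1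
    unfolding flattened_quintic_def by (simp add: mult_le_one)
qed (use assms flattened_quintic_eq_0 in simp)

lemma
  assumes "0 < d" "d \<le> 1/4"
  shows quintic_step_eq_left: "z < 1 - d \<Longrightarrow> quintic_step d z = flattened_quintic d z"
    and quintic_step_eq_right: "d < z \<Longrightarrow> quintic_step d z = 1 - flattened_quintic d (1 - z)"
  using assms flattened_quintic_eq_quintic[of d z] flattened_quintic_eq_quintic[of d "1 - z"]
    quintic_reflect[of z]
  by (auto simp: quintic_step_def)

lemma smooth_step_quintic_step:
  assumes d: "0 < d" "d \<le> 1/4"
  shows "smooth_step (quintic_step d)"
proof
  show "smooth_fun (quintic_step d)"
  proof (rule smooth_fun_if_locally_smooth)
    fix y :: real
    have reflected: "smooth_fun (\<lambda>z. 1 - flattened_quintic d (1 - z))"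
      using smooth_fun_compose_affine[OF smooth_fun_flattened_quintic, of d "- 1" 1]
      by (intro smooth_fun_diff smooth_fun_const) simp
    show "\<exists>S g. open S \<and> y \<in> S \<and> smooth_fun g \<and> (\<forall>z\<in>S. quintic_step d z = g z)"
    proof (cases "y < 1/2")
      case True
      then show ?thesis
        using d quintic_step_eq_left smooth_fun_flattened_quintic
        by (intro exI[of _ "{..<1 - d}"] exI[of _ "flattened_quintic d"]) auto
    next
      case False
      then show ?thesis
        using d quintic_step_eq_right reflected
        by (intro exI[of _ "{d<..}"] exI[of _ "\<lambda>z. 1 - flattened_quintic d (1 - z)"]) auto
    qed
  qed
  show "quintic_step d z = 0" if "z \<le> 0" for z
    using that d flattened_quintic_eq_0 by (simp add: quintic_step_def)
  show "quintic_step d z = 1" if "1 \<le> z" for z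
    using that d flattened_quintic_eq_0[of d "1 - z"] by (simp add: quintic_step_def)
qed

lemma quintic_step_range: "0 < d \<Longrightarrow> 0 \<le> quintic_step d z \<and> quintic_step d z \<le> 1"
  using flattened_quintic_range[of d z] flattened_quintic_range[of d "1 - z"]
  by (auto simp: quintic_step_def)

lemma abs_deriv2_quintic_step_le:
  assumes M1: "\<And>z. \<bar>deriv flat_step z\<bar> \<le> M1" and M2: "\<And>z. \<bar>deriv (deriv flat_step) z\<bar> \<le> M2"
    and d: "0 < d" "d \<le> 1/4" "d * (10 * M2 + 60 * M1 + 60) \<le> 1"
  shows "\<bar>deriv (deriv (quintic_step d)) z\<bar> \<le> 15 / 2"
proof (cases "z < 1 - d")
  case True
  then have "deriv (deriv (quintic_step d)) z = deriv (deriv (flattened_quintic d)) z"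
    using quintic_step_eq_left[OF d(1,2)] by (intro deriv2_eq_on_open[of "{..<1 - d}"]) auto
  then show ?thesis
    using True d flat_step.abs_deriv2_flattened_quintic_le[OF flat_step_range M1 M2 d, of z]
    by (simp add: flattened_quintic_def[abs_def])
next
  case False
  then have "deriv (deriv (quintic_step d)) z
      = deriv (deriv (\<lambda>z. 1 - flattened_quintic d (1 - z))) z"
    using quintic_step_eq_right[OF d(1,2)] d by (intro deriv2_eq_on_open[of "{d<..}"]) auto
  also have "\<dots> = - deriv (deriv (flattened_quintic d)) (1 - z)"
    by (rule deriv2_point_reflection[OF smooth_fun_flattened_quintic])
  finally show ?thesis
    using False d flat_step.abs_deriv2_flattened_quintic_le[OF flat_step_range M1 M2 d, of "1 - z"]
    by (simp add: flattened_quintic_def[abs_def])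
qed

lemma exists_smooth_step_deriv2_le:
  "\<exists>T. smooth_step T \<and> (\<forall>z. 0 \<le> T z \<and> T z \<le> 1) \<and> (\<forall>z. \<bar>deriv (deriv T) z\<bar> \<le> 15 / 2)"
proof -
  obtain M1 M2 where M1: "\<And>z. \<bar>deriv flat_step z\<bar> \<le> M1"
    and M2: "\<And>z. \<bar>deriv (deriv flat_step) z\<bar> \<le> M2"
    using flat_step.bounded_deriv flat_step.bounded_deriv2 by blast
  define d where "d = min (1/4) (1 / (10 * M2 + 60 * M1 + 60))"
  have "0 \<le> M1" "0 \<le> M2"
    using M1[of 0] M2[of 0] by linarith+
  then have d: "0 < d" "d \<le> 1/4" "d * (10 * M2 + 60 * M1 + 60) \<le> 1"
    unfolding d_def by (auto simp: min_def field_simps)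
  then show ?thesis
    using smooth_step_quintic_step quintic_step_range abs_deriv2_quintic_step_le[OF M1 M2 d]
    by blast
qed

section \<open>Smoothed staircases\<close>

context smooth_step
begin

definition smooth_stair :: "real \<Rightarrow> (int \<Rightarrow> real) \<Rightarrow> real \<Rightarrow> real" where
  "smooth_stair e X y =
     X \<lfloor>y\<rfloor> + (X (\<lfloor>y\<rfloor> + 1) - X \<lfloor>y\<rfloor>) * T ((y - (of_int \<lfloor>y\<rfloor> + e)) / (1 - 2 * e))"

text \<open>On \<open>(k - e, k)\<close> the step from \<open>X (k - 1)\<close> is already complete, so near every point the
  stair is a single rescaled copy of \<open>T\<close>.\<close>

lemma smooth_stair_eq_local:
  assumes e: "0 < e" "e < 1/2" and y: "of_int k - e < y" "y < of_int k + 1"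
  shows "smooth_stair e X y = X k + (X (k + 1) - X k) * T ((y - (of_int k + e)) / (1 - 2 * e))"
proof (cases "of_int k \<le> y")
  case True
  then have "\<lfloor>y\<rfloor> = k"
    using y by (simp add: floor_eq_iff)
  then show ?thesis
    by (simp add: smooth_stair_def)
next
  case False
  then have "\<lfloor>y\<rfloor> = k - 1"
    using e y by (simp add: floor_eq_iff)
  moreover have "1 \<le> (y - (of_int (k - 1) + e)) / (1 - 2 * e)"
    using e y by (simp add: le_divide_eq)
  moreover have "(y - (of_int k + e)) / (1 - 2 * e) \<le> 0"
    using e False by (simp add: divide_nonpos_pos)
  ultimately show ?thesis
    by (simp add: smooth_stair_def eq_0_if_nonpos eq_1_if_ge_1)
qed

lemma smooth_stair_eq_node:
  assumes e: "0 < e" "e < 1/2" and y: "\<bar>y - of_int k\<bar> < e"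
  shows "smooth_stair e X y = X k"
proof (cases "of_int k \<le> y")
  case True
  then have "(y - (of_int k + e)) / (1 - 2 * e) \<le> 0"
    using e y by (simp add: divide_nonpos_pos)
  then show ?thesis
    using e y smooth_stair_eq_local[OF e, of k y] by (simp add: eq_0_if_nonpos)
next
  case False
  then have "1 \<le> (y - (of_int (k - 1) + e)) / (1 - 2 * e)"
    using e y by (simp add: le_divide_eq)
  then show ?thesis
    using e y False smooth_stair_eq_local[OF e, of "k - 1" y] by (simp add: eq_1_if_ge_1)
qed

lemma smooth_fun_rescaled: "smooth_fun (\<lambda>z. A + D * T ((z - c) / s))"
  by (intro smooth_fun_add smooth_fun_mult smooth_fun_const smooth_fun_compose_shift_scale smooth)

lemma deriv_rescaled: "deriv (\<lambda>z. A + D * T ((z - c) / s)) = (\<lambda>z. D * (deriv T ((z - c) / s) / s))"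
  by (intro deriv_eqI) (auto intro!: derivative_eq_intros DERIV_compose_shift_scale smooth_fun_DERIV smooth)

lemma deriv2_rescaled:
  "deriv (deriv (\<lambda>z. A + D * T ((z - c) / s))) = (\<lambda>z. D * (deriv (deriv T) ((z - c) / s) / s / s))"
  unfolding deriv_rescaled
  by (intro deriv_eqI DERIV_cmult DERIV_cdivide DERIV_compose_shift_scale smooth_fun_DERIV
      smooth_fun_deriv smooth)

lemma smooth_stair_eq_near:
  assumes "0 < e" "e < 1/2"
  obtains S where "open S" "y \<in> S"
    "\<And>z. z \<in> S \<Longrightarrow> smooth_stair e X z = X \<lfloor>y\<rfloor> + (X (\<lfloor>y\<rfloor> + 1) - X \<lfloor>y\<rfloor>)
        * T ((z - (of_int \<lfloor>y\<rfloor> + e)) / (1 - 2 * e))"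
proof
  show "open {of_int \<lfloor>y\<rfloor> - e <..< of_int \<lfloor>y\<rfloor> + 1}"
    by simp
  show "y \<in> {of_int \<lfloor>y\<rfloor> - e <..< of_int \<lfloor>y\<rfloor> + 1}"
    using assms of_int_floor_le[of y] real_of_int_floor_add_one_gt[of y]
    by (simp del: of_int_floor_le)
qed (use assms smooth_stair_eq_local in auto)

lemma smooth_fun_smooth_stair:
  assumes "0 < e" "e < 1/2"
  shows "smooth_fun (smooth_stair e X)"
proof (rule smooth_fun_if_locally_smooth)
  fix y
  obtain S where "open S" "y \<in> S" "\<And>z. z \<in> S \<Longrightarrow> smooth_stair e X z = X \<lfloor>y\<rfloor>
      + (X (\<lfloor>y\<rfloor> + 1) - X \<lfloor>y\<rfloor>) * T ((z - (of_int \<lfloor>y\<rfloor> + e)) / (1 - 2 * e))"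
    using smooth_stair_eq_near[OF assms] by blast
  then show "\<exists>S g. open S \<and> y \<in> S \<and> smooth_fun g \<and> (\<forall>z\<in>S. smooth_stair e X z = g z)"
    using smooth_fun_rescaled by blast
qed

lemma deriv_smooth_stair:
  assumes "0 < e" "e < 1/2"
  shows "deriv (smooth_stair e X) y = (X (\<lfloor>y\<rfloor> + 1) - X \<lfloor>y\<rfloor>)
      * (deriv T ((y - (of_int \<lfloor>y\<rfloor> + e)) / (1 - 2 * e)) / (1 - 2 * e))"
proof -
  obtain S where S: "open S" "y \<in> S" "\<And>z. z \<in> S \<Longrightarrow> smooth_stair e X z = X \<lfloor>y\<rfloor>
      + (X (\<lfloor>y\<rfloor> + 1) - X \<lfloor>y\<rfloor>) * T ((z - (of_int \<lfloor>y\<rfloor> + e)) / (1 - 2 * e))"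
    using smooth_stair_eq_near[OF assms] by blast
  from deriv_eq_on_open[OF S] show ?thesis
    by (simp only: deriv_rescaled)
qed

lemma deriv2_smooth_stair:
  assumes "0 < e" "e < 1/2"
  shows "deriv (deriv (smooth_stair e X)) y = (X (\<lfloor>y\<rfloor> + 1) - X \<lfloor>y\<rfloor>)
      * (deriv (deriv T) ((y - (of_int \<lfloor>y\<rfloor> + e)) / (1 - 2 * e)) / (1 - 2 * e) / (1 - 2 * e))"
proof -
  obtain S where S: "open S" "y \<in> S" "\<And>z. z \<in> S \<Longrightarrow> smooth_stair e X z = X \<lfloor>y\<rfloor>
      + (X (\<lfloor>y\<rfloor> + 1) - X \<lfloor>y\<rfloor>) * T ((z - (of_int \<lfloor>y\<rfloor> + e)) / (1 - 2 * e))"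
    using smooth_stair_eq_near[OF assms] by blast
  from deriv2_eq_on_open[OF S] show ?thesis
    by (simp only: deriv2_rescaled)
qed

lemma smooth_stair_range:
  assumes "\<And>k. a \<le> X k \<and> X k \<le> b" and "\<And>z. 0 \<le> T z \<and> T z \<le> 1"
  shows "a \<le> smooth_stair e X y \<and> smooth_stair e X y \<le> b"
proof -
  define t where "t = T ((y - (of_int \<lfloor>y\<rfloor> + e)) / (1 - 2 * e))"
  have "smooth_stair e X y = (1 - t) * X \<lfloor>y\<rfloor> + t * X (\<lfloor>y\<rfloor> + 1)"
    by (simp add: smooth_stair_def t_def algebra_simps)
  moreover have "0 \<le> t" "t \<le> 1"
    using assms(2) by (simp_all add: t_def)
  moreover have "(1 - t) * a + t * a = a" "(1 - t) * b + t * b = b"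
    by (simp_all add: algebra_simps)
  ultimately show ?thesis
    using assms(1)[of "\<lfloor>y\<rfloor>"] assms(1)[of "\<lfloor>y\<rfloor> + 1"]
    by (smt (verit) mult_left_mono)
qed

lemma abs_deriv_smooth_stair_le:
  assumes "0 < e" "e < 1/2" and "\<And>k. \<bar>X (k + 1) - X k\<bar> \<le> 1" and "\<And>z. \<bar>deriv T z\<bar> \<le> M"
  shows "\<bar>deriv (smooth_stair e X) y\<bar> \<le> M / (1 - 2 * e)"
proof -
  have "\<bar>deriv (smooth_stair e X) y\<bar> = \<bar>X (\<lfloor>y\<rfloor> + 1) - X \<lfloor>y\<rfloor>\<bar>
      * (\<bar>deriv T ((y - (of_int \<lfloor>y\<rfloor> + e)) / (1 - 2 * e))\<bar> / (1 - 2 * e))"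
    using assms(1,2) by (simp add: deriv_smooth_stair abs_mult)
  also have "\<dots> \<le> 1 * (M / (1 - 2 * e))"
    using assms by (intro mult_mono divide_right_mono) auto
  finally show ?thesis
    by simp
qed

lemma abs_deriv2_smooth_stair_le:
  assumes "0 < e" "e < 1/2" and "\<And>k. \<bar>X (k + 1) - X k\<bar> \<le> 1"
    and "\<And>z. \<bar>deriv (deriv T) z\<bar> \<le> M"
  shows "\<bar>deriv (deriv (smooth_stair e X)) y\<bar> \<le> M / (1 - 2 * e) ^ 2"
proof -
  have "\<bar>deriv (deriv (smooth_stair e X)) y\<bar> = \<bar>X (\<lfloor>y\<rfloor> + 1) - X \<lfloor>y\<rfloor>\<bar>
      * (\<bar>deriv (deriv T) ((y - (of_int \<lfloor>y\<rfloor> + e)) / (1 - 2 * e))\<bar> / (1 - 2 * e) ^ 2)"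
    using assms(1,2) by (simp add: deriv2_smooth_stair abs_mult power2_eq_square)
  also have "\<dots> \<le> 1 * (M / (1 - 2 * e) ^ 2)"
    using assms by (intro mult_mono divide_right_mono) auto
  finally show ?thesis
    by simp
qed

end

section \<open>Graphs as plane curves\<close>

lemma cx_graph: "cx (\<lambda>t. (f t, t)) = f"
  and cy_graph: "cy (\<lambda>t. (f t, t)) = (\<lambda>t. t)"
  by (simp_all add: cx_def[abs_def] cy_def[abs_def])

lemma proper_embedded_curve_graph:
  assumes f: "smooth_fun f" and S: "\<And>t. (f t, t) \<in> S"
  shows "proper_embedded_curve (\<lambda>t. (f t, t)) S"
  unfolding proper_embedded_curve_def cx_graph cy_graph
proof (intro conjI allI impI)
  have cont: "continuous_on UNIV (\<lambda>t. (f t, t))"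
    using f by (auto intro!: continuous_intros continuous_at_imp_continuous_on smooth_fun_isCont)
  show "smooth_fun f"
    by (fact f)
  show "smooth_fun (\<lambda>t. t)"
    using smooth_fun_poly[of "[:0, 1:]"] by (simp add: poly_pCons[abs_def])
  show "(deriv f t, deriv (\<lambda>t. t) t) \<noteq> (0, 0)" for t
    by simp
  show "inj (\<lambda>t. (f t, t))"
    by (rule injI) simp
  show "\<exists>g. homeomorphism UNIV (range (\<lambda>t. (f t, t))) (\<lambda>t. (f t, t)) g"
    using cont by (intro exI[of _ snd]) (auto simp: homeomorphism_def continuous_on_snd image_iff)
  show "range (\<lambda>t. (f t, t)) \<subseteq> S"
    using S by auto
  fix K :: "(real \<times> real) set"
  assume K: "compact K"
  have "closed ((\<lambda>t. (f t, t)) -` K)"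
    using cont K by (simp add: continuous_closed_vimage compact_imp_closed continuous_on_eq_continuous_at)
  moreover have "(\<lambda>t. (f t, t)) -` K \<subseteq> snd ` K"
    by force
  then have "bounded ((\<lambda>t. (f t, t)) -` K)"
    using K by (meson bounded_snd bounded_subset compact_imp_bounded)
  ultimately show "compact ((\<lambda>t. (f t, t)) -` K)"
    by (simp add: compact_eq_bounded_closed)
qed

lemma unit_tangent_y_graph: "unit_tangent_y (\<lambda>t. (f t, t)) t = 1 / sqrt ((deriv f t)\<^sup>2 + 1)"
  by (simp add: unit_tangent_y_def cx_graph cy_graph)

lemma unit_tangent_y_graph_uniformly_pos:
  assumes "\<And>t. \<bar>deriv f t\<bar> \<le> B"
  shows "\<exists>c>0. \<forall>t. c \<le> unit_tangent_y (\<lambda>t. (f t, t)) t"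
proof (intro exI[of _ "1 / sqrt (B\<^sup>2 + 1)"] conjI allI)
  show "0 < 1 / sqrt (B\<^sup>2 + 1)"
    by (simp add: add_nonneg_pos)
  fix t
  have "(deriv f t)\<^sup>2 \<le> B\<^sup>2"
    using power_mono[OF assms[of t] abs_ge_zero, of 2] by simp
  then show "1 / sqrt (B\<^sup>2 + 1) \<le> unit_tangent_y (\<lambda>t. (f t, t)) t"
    unfolding unit_tangent_y_graph
    by (intro divide_left_mono) (auto simp: add_nonneg_pos)
qed

lemma abs_curvature_graph_le: "\<bar>curvature (\<lambda>t. (f t, t)) t\<bar> \<le> \<bar>deriv (deriv f) t\<bar>"
proof -
  have "1 \<le> ((deriv f t)\<^sup>2 + 1) powr (3/2)"
    by (rule ge_one_powr_ge_zero) auto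
  moreover have "\<bar>curvature (\<lambda>t. (f t, t)) t\<bar> = \<bar>deriv (deriv f) t\<bar> / ((deriv f t)\<^sup>2 + 1) powr (3/2)"
    by (simp add: curvature_def cx_graph cy_graph)
  ultimately show ?thesis
    by (simp add: divide_le_eq mult_le_cancel_left1)
qed

section \<open>Curves through the orbits\<close>

lemma enc_pos: "0 < enc c" and enc_le_1: "enc c \<le> 1"
proof -
  have one_le_mult: "1 \<le> x \<Longrightarrow> 1 \<le> y \<Longrightarrow> (1::real) \<le> x * y" for x y
    using mult_mono[of 1 x 1 y] by simp
  have "(1::real) \<le> 2 ^ fst c * 3 ^ tape_r (snd c) * 5 ^ tape_s (snd c)"
    by (intro one_le_mult) simp_all
  then show "0 < enc c" "enc c \<le> 1"
    by (simp_all add: enc_def)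
qed

lemma exists_curve_through_plateaus:
  fixes X :: "nat \<Rightarrow> real"
  assumes "0 < e" "e < 1/20" and X: "\<And>l. a \<le> X l \<and> X l \<le> a + 1"
  shows "\<exists>\<gamma>. proper_embedded_curve \<gamma> {p. a \<le> fst p \<and> fst p \<le> a + 1} \<and>
    (\<exists>c>0. \<forall>t. unit_tangent_y \<gamma> t \<ge> c) \<and> (\<forall>l. (X l, real l) \<in> range \<gamma>) \<and>
    (\<forall>t. \<bar>curvature \<gamma> t\<bar> < 15) \<and>
    (\<forall>l. {(X l, y) | y. real l - e < y \<and> y < real l + e} \<subseteq> range \<gamma>)"
proof -
  obtain T where "smooth_step T" and T_range: "\<And>z. 0 \<le> T z \<and> T z \<le> 1"
    and T_deriv2: "\<And>z. \<bar>deriv (deriv T) z\<bar> \<le> 15 / 2"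
    using exists_smooth_step_deriv2_le by blast
  then interpret smooth_step T
    by simp
  obtain M where M: "\<And>z. \<bar>deriv T z\<bar> \<le> M"
    using bounded_deriv by blast
  have e: "0 < e" "e < 1/2" and "9/10 < 1 - 2 * e"
    using assms by auto
  then have e_small: "1/2 < (1 - 2 * e) ^ 2"
    using power_strict_mono[of "9/10" "1 - 2 * e" 2] by (simp add: power2_eq_square)
  define Y where "Y k = X (nat k)" for k
  define f where "f = smooth_stair e Y"
  have Y: "a \<le> Y k \<and> Y k \<le> a + 1" for k
    using X by (simp add: Y_def)
  have jumps: "\<bar>Y (k + 1) - Y k\<bar> \<le> 1" for k
    using Y[of k] Y[of "k + 1"] by (simp add: abs_le_iff)
  show ?thesis
  proof (intro exI[of _ "\<lambda>t. (f t, t)"] conjI allI)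
    show "proper_embedded_curve (\<lambda>t. (f t, t)) {p. a \<le> fst p \<and> fst p \<le> a + 1}"
      using smooth_stair_range[OF Y T_range] smooth_fun_smooth_stair[OF e]
      by (intro proper_embedded_curve_graph) (auto simp: f_def)
    show "\<exists>c>0. \<forall>t. c \<le> unit_tangent_y (\<lambda>t. (f t, t)) t"
      using abs_deriv_smooth_stair_le[where X = Y, OF e jumps M]
      by (intro unit_tangent_y_graph_uniformly_pos) (simp add: f_def)
    show "\<bar>curvature (\<lambda>t. (f t, t)) t\<bar> < 15" for t
    proof -
      have "\<bar>deriv (deriv f) t\<bar> \<le> 15 / 2 / (1 - 2 * e) ^ 2"
        using abs_deriv2_smooth_stair_le[where X = Y, OF e jumps T_deriv2] by (simp add: f_def)
      also have "\<dots> < 15"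
        using e_small by (simp add: divide_less_eq)
      finally show ?thesis
        using abs_curvature_graph_le[of f t] by linarith
    qed
    show segment: "{(X l, y) | y. real l - e < y \<and> y < real l + e} \<subseteq> range (\<lambda>t. (f t, t))" for l
    proof clarify
      fix y
      assume "real l - e < y" "y < real l + e"
      then have "f y = X l"
        using smooth_stair_eq_node[OF e, where k = "int l" and y = y and X = Y]
        by (simp add: f_def Y_def abs_less_iff)
      then show "(X l, y) \<in> range (\<lambda>t. (f t, t))"
        by (intro range_eqI[where x = y]) simp
    qed
    show "(X l, real l) \<in> range (\<lambda>t. (f t, t))" for l
      using segment[of l] e by auto
  qed
qed

text \<open>Only \<open>0 < \<Delta>\<^sup>l(c\<^sub>i) \<le> 1\<close> enters.\<close>

theorem mainTheorem4:
  fixes m :: nat and \<delta> :: "nat \<Rightarrow> nat \<Rightarrow> nat \<times> nat \<times> int" and q0 qh :: nat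
  assumes "tm_wf m \<delta> q0 qh"
  shows "\<exists>\<epsilon>0>0. \<forall>\<epsilon>::real. 0 < \<epsilon> \<and> \<epsilon> < \<epsilon>0 \<longrightarrow>
    (\<forall>i::nat. \<exists>\<gamma> :: real \<Rightarrow> real \<times> real.
       proper_embedded_curve \<gamma> {p. 2 * real i \<le> fst p \<and> fst p \<le> 2 * real i + 1} \<and>
       (\<exists>c>0. \<forall>t. unit_tangent_y \<gamma> t \<ge> c) \<and>
       (\<forall>l::nat. (orbit_enc \<delta> qh q0 i l + 2 * real i, real l) \<in> range \<gamma>) \<and>
       (\<forall>t. \<bar>curvature \<gamma> t\<bar> < 15) \<and>
       (\<forall>l::nat. {(orbit_enc \<delta> qh q0 i l + 2 * real i, y) | y. real l - \<epsilon> < y \<and> y < real l + \<epsilon>}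
                   \<subseteq> range \<gamma>))"
  by (intro exI[of _ "1/20"] conjI allI impI exists_curve_through_plateaus)
    (auto simp: orbit_enc_def enc_le_1 less_imp_le[OF enc_pos])

end
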